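(* The $K$-linear map $\Phi:H\to (K\oplus KY)^{2g+1}$, $\Phi(m_c)=\big(b^{\lambda_i}_{0,0}+Y\,b^{\lambda_i}_{1,0}\big)_{i=1,\dots,2g+1}$, which records the constant terms of the local components of $m_c$ at the finite points $\lambda_1,\dots,\lambda_{2g+1}$, is injective.
   Context: Standing setup. Let $k$ be a finite field of odd characteristic $p$, $W(k)$ its ring of Witt vectors, $K$ the fraction field of $W(k)$, $|\cdot|$ the $p$-adic absolute value. Let $g\ge1$ and let $\lambda_1,\dots,\lambda_{2g+1}\in W(k)$ have pairwise distinct reductions modulo $p$. Put $Q(t)=\prod_{i=1}^{2g+1}(t-\lambda_i)$ and $h(t)=\frac{Q'(t)}{2Q(t)}$. Let $\Lambda=\{\lambda_1,\dots,\lambda_{2g+1},\infty\}$, $\Lambda_0=\Lambda\setminus\{\infty\}$. The local parameter at $\lambda\in\Lambda_0$ is $s_\lambda=t-\lambda$, and at $\infty$ it is $s_\infty=t^{-1}$. Let $B_K^\dagger$ be the ring of series $\sum_{\underline\ell\ge0}a_{\underline\ell}\,t^{\ell_0}\prod_{i}(t-\lambda_i)^{-\ell_i}$ ($a_{\underline\ell}\in K$) for which there is $\eta>1$ with $|a_{\underline\ell}|\eta^{\max_i\ell_i}\to0$; $\phi_\lambda(f)$ is the Laurent expansion of $f\in B_K^\dagger$ in $s_\lambda$. The principal part is $\Pr_\lambda(\sum a_\ell s_\lambda^\ell)=\sum_{\ell<0}a_\ell s_\lambda^\ell$ for $\lambda\in\Lambda_0$ and $\Pr_\infty(\sum a_\ell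 s_\infty^\ell)=\sum_{\ell\le0}a_\ell s_\infty^\ell$; its expansion at another point $\mu$ is denoted $\phi_\mu(\cdot)$. For $\lambda\in\Lambda_0$, $\tilde R_{\lambda,c}$ is the space of $\sum_{\ell\ge0}a_\ell s_\lambda^\ell$ with $|a_\ell|\eta^\ell\to0$ for all $\eta<1$, and $R_{\infty,c}$ the analogous space of $\sum_{\ell\ge1}a_\ell s_\infty^\ell$. $B_c=\prod_{\lambda\in\Lambda_0}\tilde R_{\lambda,c}\times R_{\infty,c}$ is a $B_K^\dagger$-module via $(f\cdot G)^\mu=\phi_\mu(f)G^\mu-\sum_{\lambda\in\Lambda}\phi_\mu\big(\Pr_\lambda(\phi_\lambda(f)G^\lambda)\big)$. Let $A_K^\dagger=B_K^\dagger\oplus B_K^\dagger Y$ with $Y^2=Q(t)$, $\nabla_{GM}(1)=0$, $\nabla_{GM}(Y)=hY$; $M_c=A_K^\dagger\otimes_{B_K^\dagger}B_c$ with elements $m_c=1\otimes G_0+Y\otimes G_1$ ($G_0,G_1\in B_c$) and $\nabla_c(m_c)=1\otimes\partial_tG_0+Y\otimes(\partial_tG_1+h\cdot G_1)$, $\partial_t$ acting componentwise (as $-s_\infty^2\,d/ds_\infty$ on series in $s_\infty$). $H=\ker\nabla_c$ (the space $H^1_{MW,c}(V,\pi_*A_K^\dagger)$). Local components: $m_\lambda=G_0^\lambda+YG_1^\lambda=\sum_{j=0,1}Y^j\sum_{\ell\ge0}b^\lambda_{j,\ell}s_\lambda^\ell$ with $b^\infty_{j,0}=0$. *)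

theory Defs
  imports "HOL-Analysis.Analysis" "HOL-Computational_Algebra.Polynomial"
begin

text \<open>K is modelled abstractly as a field of characteristic 0 with an absolute value
  absv that is: a non-archimedean absolute value, normalised by absv p = 1/p, with value
  group p^Z (so p is a uniformiser: discretely valued and absolutely unramified), complete,
  and with finite residue field. For an odd prime p these conditions characterise
  K = W(k)[1/p] for the finite field k (the residue field) up to isometric isomorphism;
  W(k) is the unit ball.\<close>

definition padic_setting :: "nat \<Rightarrow> ('a::field_char_0 \<Rightarrow> real) \<Rightarrow> bool" where
  "padic_setting p absv \<longleftrightarrow>
     prime p \<and> odd p \<and>
     (\<forall>x. absv x \<ge> 0) \<and> (\<forall>x. absv x = 0 \<longleftrightarrow> x = 0) \<and>
     (\<forall>x y. absv (x * y) = absv x * absv y) \<and>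
     (\<forall>x y. absv (x + y) \<le> max (absv x) (absv y)) \<and>
     absv (of_nat p) = 1 / real p \<and>
     (\<forall>x. x \<noteq> 0 \<longrightarrow> (\<exists>n::int. absv x = real p powr (of_int n))) \<and>
     (\<forall>X::nat \<Rightarrow> 'a. (\<forall>e>0. \<exists>N. \<forall>m\<ge>N. \<forall>n\<ge>N. absv (X m - X n) < e) \<longrightarrow>
          (\<exists>L. \<forall>e>0. \<exists>N. \<forall>n\<ge>N. absv (X n - L) < e)) \<and>
     (\<exists>S. finite S \<and> S \<subseteq> {x. absv x \<le> 1} \<and>
          (\<forall>x. absv x \<le> 1 \<longrightarrow> (\<exists>s\<in>S. absv (x - s) < 1)))"

text \<open>The points of Lambda: Fin i stands for lambda_i (i = 1..2g+1), Infty for infinity.\<close>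
datatype pt = Fin nat | Infty

definition Lam :: "nat \<Rightarrow> pt set" where
  "Lam g = Fin ` {1..2*g+1} \<union> {Infty}"

text \<open>A Laurent series in the local parameter s_mu is given by its coefficient
  function int => K (coefficient of s^l).\<close>
type_synonym 'a lser = "int \<Rightarrow> 'a"

definition lbounded :: "'a::zero lser \<Rightarrow> bool" where
  "lbounded f \<longleftrightarrow> (\<exists>N::int. \<forall>l<N. f l = 0)"

text \<open>Cauchy product (finite sums for series with bounded-below support).\<close>
definition lmul :: "'a::comm_ring_1 lser \<Rightarrow> 'a lser \<Rightarrow> 'a lser" where
  "lmul f g l = (\<Sum>m\<in>{m. f m \<noteq> 0 \<and> g (l - m) \<noteq> 0}. f m * g (l - m))"

fun ptval :: "(nat \<Rightarrow> 'a) \<Rightarrow> pt \<Rightarrow> 'a::zero" where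
  "ptval lam (Fin i) = lam i"
| "ptval lam Infty = 0"

text \<open>Laurent expansion phi_mu of a polynomial P(t): at a finite point the
  expansion in s = t - mu, at infinity the expansion in s = 1/t.\<close>
fun poly_exp :: "(nat \<Rightarrow> 'a) \<Rightarrow> pt \<Rightarrow> 'a::comm_ring_1 poly \<Rightarrow> 'a lser" where
  "poly_exp lam (Fin i) P l = (if l < 0 then 0 else coeff (pcompose P [:lam i, 1:]) (nat l))"
| "poly_exp lam Infty P l = (if l > 0 then 0 else coeff P (nat (- l)))"

text \<open>Q(t) = prod (t - lambda_i), and phi_mu(h) for h = Q'/(2Q): the unique
  Laurent series L with phi_mu(2Q) * L = phi_mu(Q').\<close>
definition Qpoly :: "nat \<Rightarrow> (nat \<Rightarrow> 'a) \<Rightarrow> 'a::comm_ring_1 poly" where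
  "Qpoly g lam = (\<Prod>i\<in>{1..2*g+1}. [:- lam i, 1:])"

definition h_exp :: "nat \<Rightarrow> (nat \<Rightarrow> 'a) \<Rightarrow> pt \<Rightarrow> 'a::field_char_0 lser" where
  "h_exp g lam mu = (THE L. lbounded L \<and>
      lmul (poly_exp lam mu (smult 2 (Qpoly g lam))) L = poly_exp lam mu (pderiv (Qpoly g lam)))"

fun prin :: "pt \<Rightarrow> 'a::zero lser \<Rightarrow> 'a lser" where
  "prin (Fin i) f l = (if l < 0 then f l else 0)"
| "prin Infty f l = (if l \<le> 0 then f l else 0)"

text \<open>Expansion at mu of a principal part P taken at lambda (a rational function:
  sum_k P(-k) (t - lambda)^(-k) for finite lambda, sum_k P(-k) t^k for lambda = infinity).\<close>
fun pp_exp :: "(nat \<Rightarrow> 'a) \<Rightarrow> pt \<Rightarrow> pt \<Rightarrow> 'a::field lser \<Rightarrow> 'a lser" where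
  "pp_exp lam (Fin i) (Fin j) P l =
     (if i = j then P l
      else if l < 0 then 0
      else (\<Sum>k\<in>{k::nat. 1 \<le> k \<and> P (- int k) \<noteq> 0}.
              P (- int k) * (-1) ^ nat l * of_nat ((k + nat l - 1) choose (nat l))
                * inverse ((lam j - lam i) ^ (k + nat l))))"
| "pp_exp lam (Fin i) Infty P l =
     (if l < 1 then 0
      else (\<Sum>k\<in>{k::nat. 1 \<le> k \<and> k \<le> nat l \<and> P (- int k) \<noteq> 0}.
              P (- int k) * of_nat ((nat l - 1) choose (nat l - k)) * (lam i) ^ (nat l - k)))"
| "pp_exp lam Infty (Fin j) P l =
     (if l < 0 then 0
      else (\<Sum>k\<in>{k::nat. P (- int k) \<noteq> 0}.
              P (- int k) * of_nat (k choose (nat l)) * (lam j) ^ (k - nat l)))"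
| "pp_exp lam Infty Infty P l = P l"

definition growth_ok :: "('a \<Rightarrow> real) \<Rightarrow> 'a lser \<Rightarrow> bool" where
  "growth_ok absv a \<longleftrightarrow>
     (\<forall>eta::real. 0 < eta \<and> eta < 1 \<longrightarrow> ((\<lambda>n::nat. absv (a (int n)) * eta ^ n) \<longlonglongrightarrow> 0))"

text \<open>Elements of B_c: a family of local series indexed by the points of Lambda
  (zero outside Lambda), power series at finite points, series in s_infty without
  constant term at infinity, converging on the open unit disc.\<close>
definition Bc :: "('a::zero \<Rightarrow> real) \<Rightarrow> nat \<Rightarrow> (pt \<Rightarrow> 'a lser) set" where
  "Bc absv g = {G. (\<forall>mu. mu \<notin> Lam g \<longrightarrow> G mu = (\<lambda>_. 0)) \<and>
      (\<forall>i\<in>{1..2*g+1}. (\<forall>l<0. G (Fin i) l = 0) \<and> growth_ok absv (G (Fin i))) \<and>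
      (\<forall>l\<le>0. G Infty l = 0) \<and> growth_ok absv (G Infty)}"

text \<open>Module action (f . G)^mu = phi_mu(f) G^mu - sum_lambda phi_mu(Pr_lambda(phi_lambda(f) G^lambda)),
  for f given by its family of expansions phi.\<close>
definition act :: "nat \<Rightarrow> (nat \<Rightarrow> 'a) \<Rightarrow> (pt \<Rightarrow> 'a::field lser) \<Rightarrow> (pt \<Rightarrow> 'a lser) \<Rightarrow> pt \<Rightarrow> 'a lser" where
  "act g lam phi G mu l =
     (if mu \<in> Lam g then
        lmul (phi mu) (G mu) l - (\<Sum>la\<in>Lam g. pp_exp lam la mu (prin la (lmul (phi la) (G la))) l)
      else 0)"

text \<open>d/dt on local series: d/ds at finite points, -s^2 d/ds at infinity.\<close>
fun dt :: "pt \<Rightarrow> 'a::comm_ring_1 lser \<Rightarrow> 'a lser" where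
  "dt (Fin i) a l = of_int (l + 1) * a (l + 1)"
| "dt Infty a l = - (of_int (l - 1) * a (l - 1))"

text \<open>nabla_c(1 (x) G0 + Y (x) G1) = 1 (x) d_t G0 + Y (x) (d_t G1 + h . G1).\<close>
definition nabla_c :: "nat \<Rightarrow> (nat \<Rightarrow> 'a) \<Rightarrow> (pt \<Rightarrow> 'a::field_char_0 lser) \<times> (pt \<Rightarrow> 'a lser)
     \<Rightarrow> (pt \<Rightarrow> 'a lser) \<times> (pt \<Rightarrow> 'a lser)" where
  "nabla_c g lam m = (\<lambda>mu l. dt mu (fst m mu) l,
                      \<lambda>mu l. dt mu (snd m mu) l + act g lam (h_exp g lam) (snd m) mu l)"

text \<open>H = ker nabla_c, elements m_c = 1 (x) G0 + Y (x) G1 represented as pairs (G0, G1).\<close>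
definition Hc :: "('a::field_char_0 \<Rightarrow> real) \<Rightarrow> nat \<Rightarrow> (nat \<Rightarrow> 'a)
     \<Rightarrow> ((pt \<Rightarrow> 'a lser) \<times> (pt \<Rightarrow> 'a lser)) set" where
  "Hc absv g lam = {m. fst m \<in> Bc absv g \<and> snd m \<in> Bc absv g \<and>
                       nabla_c g lam m = ((\<lambda>_ _. 0), (\<lambda>_ _. 0))}"

text \<open>Phi(m_c) = (b_{0,0}^{lambda_i} + Y b_{1,0}^{lambda_i})_i, an element of (K + KY)^{2g+1}
  represented as pairs indexed by i in 1..2g+1 (and (0,0) elsewhere).\<close>
definition Phi :: "nat \<Rightarrow> (pt \<Rightarrow> 'a::zero lser) \<times> (pt \<Rightarrow> 'a lser) \<Rightarrow> nat \<Rightarrow> 'a \<times> 'a" where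
  "Phi g m = (\<lambda>i. if i \<in> {1..2*g+1} then (fst m (Fin i) 0, snd m (Fin i) 0) else (0, 0))"

end

theory Submission
  imports Defs "HOL-Computational_Algebra.Formal_Laurent_Series"
begin

(* Since Phi only records constant terms, it suffices
   to show that two horizontal sections m = (G0, G1), m' = (G0', G1') with the same constant
   terms at the finite points coincide; no linearity of the module action is needed.

   - The series of h = Q'/(2Q) is computed by passing to formal Laurent series: at a finite
     point lambda_i it has a simple pole with residue 1/2, at infinity it starts with
     ((2g+1)/2) s_infty.
   - The Cauchy product is local: coefficients of f*G at index < a + n depend only on the
     coefficients of G below n, and at index a + n only the leading term f_a G_n is new.
   - Component G0: d_t G0 = 0 forces every non-constant coefficient to vanish.
   - Component G1: the principal parts in the module action only see coefficients that
     already agree, so locally d_t G1 + h G1 agrees for m and m'.  Comparing the coefficient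
     of index n gives (n + 1/2) (G_n - G'_n) = 0 at finite points and
     ((2g+1)/2 - n) (G_n - G'_n) = 0 at infinity; the factors never vanish, so a strong
     induction on n shows G1 = G1'. *)

lemma nth_Abs_fls_lbounded:
  assumes "\<forall>l<N. f l = 0"
  shows "fls_nth (Abs_fls f) n = f n"
proof (rule nth_Abs_fls_ex_nat_lower_bound)
  show "\<exists>m. \<forall>n>m. f (- int n) = 0"
    using assms by (intro exI[of _ "nat (- N)"]) auto
qed

lemma lmul_interval:
  fixes f G :: "'a::comm_ring_1 lser"
  assumes "\<forall>m<a. f m = 0" "\<forall>m<c. G m = 0"
  shows "lmul f G l = (\<Sum>m\<in>{a..l-c}. f m * G (l-m))"
  unfolding lmul_def
proof (rule sum.mono_neutral_left)
  show "{m. f m \<noteq> 0 \<and> G (l - m) \<noteq> 0} \<subseteq> {a..l - c}"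
  proof
    fix m assume "m \<in> {m. f m \<noteq> 0 \<and> G (l - m) \<noteq> 0}"
    then have "\<not> m < a" "\<not> l - m < c" using assms by auto
    then show "m \<in> {a..l - c}" by auto
  qed
qed auto

lemma lmul_fls:
  fixes f G :: "'a::field lser"
  assumes f: "\<forall>m<a. f m = 0" and G: "\<forall>m<c. G m = 0"
  shows "lmul f G l = fls_nth (Abs_fls f * Abs_fls G) l"
proof -
  define F' where "F' = Abs_fls f"
  define G' where "G' = Abs_fls G"
  have F'n: "\<And>n. fls_nth F' n = f n" unfolding F'_def by (rule nth_Abs_fls_lbounded[OF f])
  have G'n: "\<And>n. fls_nth G' n = G n" unfolding G'_def by (rule nth_Abs_fls_lbounded[OF G])
  show ?thesis
  proof (cases "F' = 0 \<or> G' = 0")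
    case True
    then have "f = (\<lambda>_. 0) \<or> G = (\<lambda>_. 0)" using F'n G'n by auto
    then show ?thesis using True by (auto simp: lmul_def F'_def[symmetric] G'_def[symmetric])
  next
    case False
    have aF: "a \<le> fls_subdegree F'" using False f F'n by (intro fls_subdegree_geI) auto
    have cG: "c \<le> fls_subdegree G'" using False G G'n by (intro fls_subdegree_geI) auto
    have "fls_nth (F' * G') l
        = (\<Sum>i=fls_subdegree F'..l - fls_subdegree G'. fls_nth F' i * fls_nth G' (l - i))"
      by (rule fls_times_nth(2))
    also have "\<dots> = (\<Sum>i=a..l - c. fls_nth F' i * fls_nth G' (l - i))"
      using aF cG by (intro sum.mono_neutral_left) (auto simp: not_le)
    finally show ?thesis using lmul_interval[OF f G] F'n G'n by (simp add: F'_def G'_def)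
  qed
qed

lemma the_lmul_quotient:
  fixes A B :: "'a::field lser"
  assumes A: "\<forall>m<a. A m = 0" and B: "\<forall>m<b. B m = 0" and A_nz: "Abs_fls A \<noteq> 0"
  shows "(THE L. lbounded L \<and> lmul A L = B) = fls_nth (Abs_fls B / Abs_fls A)"
proof (rule the_equality)
  define q where "q = Abs_fls B / Abs_fls A"
  obtain N where N: "\<forall>l<N. fls_nth q l = 0"
    by (metis fls_eq0_below_subdegree fls_zero_nth)
  have "lmul A (fls_nth q) l = B l" for l
    using lmul_fls[OF A N, of l] A_nz nth_Abs_fls_lbounded[OF B]
    by (simp add: fls_nth_inverse q_def)
  then show "lbounded (fls_nth q) \<and> lmul A (fls_nth q) = B"
    using N by (auto simp: lbounded_def)
next
  fix L assume L: "lbounded L \<and> lmul A L = B"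
  then obtain N where N: "\<forall>l<N. L l = 0" by (auto simp: lbounded_def)
  have "Abs_fls A * Abs_fls L = Abs_fls B"
    by (rule fls_eqI) (metis L lmul_fls[OF A N] nth_Abs_fls_lbounded[OF B])
  then have "Abs_fls L = Abs_fls B / Abs_fls A" using A_nz by (simp add: field_simps)
  then show "L = fls_nth (Abs_fls B / Abs_fls A)"
    using nth_Abs_fls_lbounded[OF N] by (metis ext)
qed

lemma Abs_fls_subdegree:
  assumes "\<forall>l<d. f l = 0" "f d \<noteq> 0"
  shows "fls_subdegree (Abs_fls f) = d" "Abs_fls f \<noteq> 0"
  using nth_Abs_fls_lbounded[OF assms(1)] assms by (auto intro!: fls_subdegree_eqI fls_nonzeroI)

lemma coeff_pcompose_shift_0: "coeff (pcompose P [:a, 1:]) 0 = poly P (a::'a::idom)"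
  by (simp add: poly_0_coeff_0[symmetric] poly_pcompose)

lemma coeff_pcompose_shift_1: "coeff (pcompose P [:a, 1:]) 1 = poly (pderiv P) (a::'a::idom)"
proof -
  have "coeff (pcompose P [:a, 1:]) 1 = poly (pderiv (pcompose P [:a, 1:])) 0"
    by (simp add: coeff_pderiv poly_0_coeff_0)
  also have "\<dots> = poly (pderiv P) a"
    by (simp add: pderiv_pcompose poly_pcompose pderiv_pCons)
  finally show ?thesis .
qed

lemma Qpoly_root: "i \<in> {1..2*g+1} \<Longrightarrow> poly (Qpoly g lam) (lam i) = (0::'a::comm_ring_1)"
  unfolding Qpoly_def poly_prod by (rule prod_zero) auto

lemma Qpoly_simple_root:
  fixes lam :: "nat \<Rightarrow> 'a::idom"
  assumes distinct: "\<forall>i\<in>{1..2*g+1}. \<forall>j\<in>{1..2*g+1}. i \<noteq> j \<longrightarrow> lam i \<noteq> lam j"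
    and i: "i \<in> {1..2*g+1}"
  shows "poly (pderiv (Qpoly g lam)) (lam i) \<noteq> 0"
proof -
  define R where "R = (\<Prod>j\<in>{1..2*g+1} - {i}. [:- lam j, 1:])"
  have Q: "Qpoly g lam = [:- lam i, 1:] * R"
    unfolding Qpoly_def R_def using i by (intro prod.remove) auto
  have "poly (pderiv (Qpoly g lam)) (lam i) = (\<Prod>j\<in>{1..2*g+1} - {i}. lam i - lam j)"
    unfolding Q pderiv_mult R_def by (simp add: pderiv_pCons poly_prod)
  also have "\<dots> \<noteq> 0" using distinct i by (auto simp: prod_zero_iff)
  finally show ?thesis .
qed

lemma Qpoly_degree: "degree (Qpoly g (lam :: nat \<Rightarrow> 'a::idom)) = 2*g+1"
  unfolding Qpoly_def by (subst degree_prod_eq_sum_degree) auto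

lemma Qpoly_lead: "coeff (Qpoly g (lam :: nat \<Rightarrow> 'a::idom)) (2*g+1) = 1"
proof -
  have "lead_coeff (Qpoly g lam) = 1"
    unfolding Qpoly_def lead_coeff_prod by simp
  then show ?thesis by (simp add: Qpoly_degree)
qed

lemma Qpoly_deriv_lead:
  "coeff (pderiv (Qpoly g (lam :: nat \<Rightarrow> 'a::{idom,ring_char_0}))) (2*g) = of_nat (2*g+1)"
  using coeff_pderiv[of "Qpoly g lam" "2*g"] Qpoly_lead[of g lam] by simp

lemma h_exp_Fin:
  fixes lam :: "nat \<Rightarrow> 'a::field_char_0"
  assumes distinct: "\<forall>i\<in>{1..2*g+1}. \<forall>j\<in>{1..2*g+1}. i \<noteq> j \<longrightarrow> lam i \<noteq> lam j"
    and i: "i \<in> {1..2*g+1}"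
  shows "\<forall>l< -1. h_exp g lam (Fin i) l = 0" "h_exp g lam (Fin i) (-1) = 1/2"
proof -
  define Q where "Q = Qpoly g lam"
  define c where "c = poly (pderiv Q) (lam i)"
  have c: "c \<noteq> 0" unfolding c_def Q_def by (rule Qpoly_simple_root[OF distinct i])
  define A where "A = poly_exp lam (Fin i) (smult 2 Q)"
  define B where "B = poly_exp lam (Fin i) (pderiv Q)"
  have A0: "\<forall>l<1. A l = 0"
    using Qpoly_root[OF i, of lam]
    by (auto simp: A_def Q_def coeff_pcompose_shift_0 not_less less_le)
  have A1: "A 1 = 2 * c"
    by (simp add: A_def coeff_pcompose_shift_1[simplified] pderiv_smult c_def)
  have B0: "\<forall>l<0. B l = 0" by (simp add: B_def)
  have B00: "B 0 = c" by (simp add: B_def coeff_pcompose_shift_0 c_def)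
  have sA: "fls_subdegree (Abs_fls A) = 1" "Abs_fls A \<noteq> 0"
    using Abs_fls_subdegree[OF A0] A1 c by auto
  have sB: "fls_subdegree (Abs_fls B) = 0" "Abs_fls B \<noteq> 0"
    using Abs_fls_subdegree[OF B0] B00 c by auto
  have h: "h_exp g lam (Fin i) = fls_nth (Abs_fls B / Abs_fls A)"
    unfolding h_exp_def A_def[symmetric] B_def[symmetric] Q_def[symmetric]
    by (rule the_lmul_quotient[OF A0 B0 sA(2)])
  show "\<forall>l< -1. h_exp g lam (Fin i) l = 0"
    using fls_divide_nth_below[of _ "Abs_fls B" "Abs_fls A"] sA sB h by auto
  show "h_exp g lam (Fin i) (-1) = 1/2"
    using fls_divide_nth_base[of "Abs_fls B" "Abs_fls A"] sA sB h
      nth_Abs_fls_lbounded[OF A0, of 1] nth_Abs_fls_lbounded[OF B0, of 0] A1 B00 c by simp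
qed

lemma h_exp_Infty:
  fixes lam :: "nat \<Rightarrow> 'a::field_char_0"
  shows "\<forall>l<1. h_exp g lam Infty l = 0" "h_exp g lam Infty 1 = of_nat (2*g+1) / 2"
proof -
  define Q where "Q = Qpoly g lam"
  define A where "A = poly_exp lam Infty (smult 2 Q)"
  define B where "B = poly_exp lam Infty (pderiv Q)"
  have A0: "\<forall>l< -int (2*g+1). A l = 0"
    using Qpoly_degree[of g lam] by (auto simp: A_def Q_def coeff_eq_0)
  have A1: "A (- int (2*g+1)) = 2"
  proof -
    have "nat (- (- int (2*g+1))) = 2*g+1" by simp
    then show ?thesis using Qpoly_lead[of g lam] by (simp only: A_def Q_def poly_exp.simps) simp
  qed
  have B0: "\<forall>l< -int (2*g). B l = 0"
    using Qpoly_degree[of g lam] by (auto simp: B_def Q_def coeff_eq_0 degree_pderiv)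
  have B1: "B (- int (2*g)) = of_nat (2*g+1)"
  proof -
    have "nat (- (- int (2*g))) = 2*g" by simp
    then show ?thesis using Qpoly_deriv_lead[of g lam] by (simp only: B_def Q_def poly_exp.simps) simp
  qed
  have sA: "fls_subdegree (Abs_fls A) = - int (2*g+1)" "Abs_fls A \<noteq> 0"
    using Abs_fls_subdegree[OF A0] A1 by auto
  have sB: "fls_subdegree (Abs_fls B) = - int (2*g)" "Abs_fls B \<noteq> 0"
    using Abs_fls_subdegree[OF B0] B1 by (auto simp del: of_nat_Suc)
  have h: "h_exp g lam Infty = fls_nth (Abs_fls B / Abs_fls A)"
    unfolding h_exp_def A_def[symmetric] B_def[symmetric] Q_def[symmetric]
    by (rule the_lmul_quotient[OF A0 B0 sA(2)])
  show "\<forall>l<1. h_exp g lam Infty l = 0"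
    using fls_divide_nth_below[of _ "Abs_fls B" "Abs_fls A"] sA sB h by auto
  have "fls_nth (Abs_fls B / Abs_fls A) 1 = B (- int (2*g)) / A (- int (2*g+1))"
    using fls_divide_nth_base[of "Abs_fls B" "Abs_fls A"] sA sB
      nth_Abs_fls_lbounded[OF A0] nth_Abs_fls_lbounded[OF B0] by simp
  then show "h_exp g lam Infty 1 = of_nat (2*g+1) / 2" using h A1 B1 by simp
qed

lemma lmul_agree_below:
  fixes f G G' :: "'a::comm_ring_1 lser"
  assumes f: "\<forall>m<a. f m = 0" and G: "\<forall>m<c. G m = 0" and G': "\<forall>m<c. G' m = 0"
    and agree: "\<forall>j<n. G j = G' j" and l: "l < a + n"
  shows "lmul f G l = lmul f G' l"
  unfolding lmul_interval[OF f G] lmul_interval[OF f G'] using agree l by (intro sum.cong) auto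

lemma lmul_diff_leading:
  fixes f G G' :: "'a::comm_ring_1 lser"
  assumes f: "\<forall>m<a. f m = 0" and G: "\<forall>m<c. G m = 0" and G': "\<forall>m<c. G' m = 0"
    and agree: "\<forall>j<n. G j = G' j"
  shows "lmul f G (a + n) - lmul f G' (a + n) = f a * (G n - G' n)"
proof -
  let ?S = "{a..a + n - c}"
  have "lmul f G (a + n) - lmul f G' (a + n)
      = (\<Sum>m\<in>?S. f m * (G (a + n - m) - G' (a + n - m)))"
    unfolding lmul_interval[OF f G] lmul_interval[OF f G']
    by (simp add: sum_subtractf right_diff_distrib)
  also have "\<dots> = (\<Sum>m\<in>?S. if m = a then f a * (G n - G' n) else 0)"
    using agree by (intro sum.cong) auto
  also have "\<dots> = f a * (G n - G' n)"
    using G G' by (auto simp: not_le)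
  finally show ?thesis .
qed

lemma lser_eq_induct:
  fixes F F' :: "'a lser"
  assumes below: "\<forall>l<d. F l = F' l"
    and step: "\<And>n. d \<le> n \<Longrightarrow> \<forall>j<n. F j = F' j \<Longrightarrow> F n = F' n"
  shows "F = F'"
proof
  have agree: "\<forall>j<d + int k. F j = F' j" for k
  proof (induction k)
    case 0
    then show ?case using below by simp
  next
    case (Suc k)
    then have "F (d + int k) = F' (d + int k)" by (intro step) auto
    moreover have "j < d + int (Suc k) \<Longrightarrow> j < d + int k \<or> j = d + int k" for j
      by linarith
    ultimately show ?case using Suc.IH by blast
  qed
  fix l
  show "F l = F' l" using agree[of "nat (l - d + 1)"] by auto
qed

lemma dt_kernel_coeff:
  assumes "\<forall>l. dt mu (F :: 'a::{idom,ring_char_0} lser) l = 0" and "l \<noteq> 0"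
  shows "F l = 0"
proof (cases mu)
  case (Fin i)
  then show ?thesis using assms spec[OF assms(1), of "l - 1"] by simp
next
  case Infty
  then show ?thesis using assms spec[OF assms(1), of "l + 1"] by simp
qed

text \<open>Near a finite point the equation d_t G + h G = 0 has a regular singularity with
  indicial root -1/2, so a power-series solution is fixed by its constant term.\<close>
lemma local_solution_unique_Fin:
  fixes h F F' :: "'a::field_char_0 lser"
  assumes h: "\<forall>l< -1. h l = 0" "h (-1) = 1/2"
    and F: "\<forall>l<0. F l = 0" and F': "\<forall>l<0. F' l = 0" and const: "F 0 = F' 0"
    and eq: "\<And>l. dt (Fin i) F l + lmul h F l = dt (Fin i) F' l + lmul h F' l"
  shows "F = F'"
proof (rule lser_eq_induct[where d = 0])
  show "\<forall>l<0. F l = F' l" using F F' by simp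
next
  fix n :: int assume n: "0 \<le> n" and agree: "\<forall>j<n. F j = F' j"
  show "F n = F' n"
  proof (cases "n = 0")
    case True
    then show ?thesis using const by simp
  next
    case False
    define x where "x = -1 + n"
    have leading: "lmul h F x - lmul h F' x = h (-1) * (F n - F' n)"
      unfolding x_def by (rule lmul_diff_leading[OF h(1) F F' agree])
    have "of_int n * F n + lmul h F x = of_int n * F' n + lmul h F' x"
      using eq[of x] by (simp add: x_def)
    then have "of_int n * (F n - F' n) + (lmul h F x - lmul h F' x) = 0"
      by (simp add: algebra_simps)
    then have "(of_int n + 1/2) * (F n - F' n) = 0"
      by (subst (asm) leading) (simp add: h(2) distrib_right)
    moreover have "of_int n + 1/2 \<noteq> (0::'a)"
    proof
      assume "of_int n + 1/2 = (0::'a)"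
      then have "(of_int (2 * n + 1) :: 'a) = 0" by (simp add: field_simps)
      then have "2 * n + 1 = 0" by (simp only: of_int_eq_0_iff)
      then show False using n by simp
    qed
    ultimately show ?thesis by simp
  qed
qed

text \<open>At infinity the indicial root is (2g+1)/2, a half-odd integer, so it is never hit:
  a solution without constant term is unique.\<close>
lemma local_solution_unique_Infty:
  fixes h F F' :: "'a::field_char_0 lser"
  assumes h: "\<forall>l<1. h l = 0" "h 1 = of_nat (2*g+1) / 2"
    and F: "\<forall>l<1. F l = 0" and F': "\<forall>l<1. F' l = 0"
    and eq: "\<And>l. dt Infty F l + lmul h F l = dt Infty F' l + lmul h F' l"
  shows "F = F'"
proof (rule lser_eq_induct[where d = 1])
  show "\<forall>l<1. F l = F' l" using F F' by simp
next
  fix n :: int assume n: "1 \<le> n" and agree: "\<forall>j<n. F j = F' j"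
  define x where "x = 1 + n"
  have leading: "lmul h F x - lmul h F' x = h 1 * (F n - F' n)"
    unfolding x_def by (rule lmul_diff_leading[OF h(1) F F' agree])
  have "- (of_int n * F n) + lmul h F x = - (of_int n * F' n) + lmul h F' x"
    using eq[of x] by (simp add: x_def)
  then have "(lmul h F x - lmul h F' x) - of_int n * (F n - F' n) = 0"
    by (simp add: algebra_simps)
  then have "(h 1 - of_int n) * (F n - F' n) = 0"
    by (subst (asm) leading) (simp add: left_diff_distrib)
  moreover have "h 1 - of_int n \<noteq> 0"
  proof
    assume "h 1 - of_int n = 0"
    then have "(of_int (int (2*g+1) - 2 * n) :: 'a) = 0" using h(2) by (simp add: field_simps)
    then have "int (2*g+1) - 2 * n = 0" by (simp only: of_int_eq_0_iff)
    then show False by presburger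
  qed
  ultimately show "F n = F' n" by simp
qed

lemma Lam_cases: "mu \<in> Lam g \<longleftrightarrow> mu = Infty \<or> (\<exists>i\<in>{1..2*g+1}. mu = Fin i)"
  unfolding Lam_def by auto

lemma horizontal_Bc_unique:
  fixes G G' :: "pt \<Rightarrow> 'a::field_char_0 lser"
  assumes G: "G \<in> Bc absv g" and G': "G' \<in> Bc absv g"
    and E: "\<forall>mu l. dt mu (G mu) l = 0" and E': "\<forall>mu l. dt mu (G' mu) l = 0"
    and const: "\<forall>i\<in>{1..2*g+1}. G (Fin i) 0 = G' (Fin i) 0"
  shows "G = G'"
proof (intro ext)
  fix mu l
  show "G mu l = G' mu l"
  proof (cases "l = 0")
    case False
    then show ?thesis using dt_kernel_coeff E E' by metis
  next
    case l: True
    show ?thesis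
    proof (cases "mu \<in> Lam g")
      case False
      then show ?thesis using G G' by (simp add: Bc_def)
    next
      case True
      then show ?thesis unfolding Lam_cases
        using G G' const l by (auto simp: Bc_def)
    qed
  qed
qed

text \<open>The principal
  parts entering the module action only involve coefficients that are already known to
  agree, so the local equations of G and G' coincide.\<close>
lemma twisted_horizontal_Bc_unique:
  fixes G G' :: "pt \<Rightarrow> 'a::field_char_0 lser" and h :: "pt \<Rightarrow> 'a lser"
  assumes G: "G \<in> Bc absv g" and G': "G' \<in> Bc absv g"
    and E: "\<forall>mu l. dt mu (G mu) l + act g lam h G mu l = 0"
    and E': "\<forall>mu l. dt mu (G' mu) l + act g lam h G' mu l = 0"
    and const: "\<forall>i\<in>{1..2*g+1}. G (Fin i) 0 = G' (Fin i) 0"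
    and h_Fin: "\<forall>i\<in>{1..2*g+1}. (\<forall>l< -1. h (Fin i) l = 0) \<and> h (Fin i) (-1) = 1/2"
    and h_Infty: "\<forall>l<1. h Infty l = 0" "h Infty 1 = of_nat (2*g+1) / 2"
  shows "G = G'"
proof -
  have G_Fin: "\<forall>l<0. G (Fin i) l = 0" "\<forall>l<0. G' (Fin i) l = 0" if "i \<in> {1..2*g+1}" for i
    using G G' that by (auto simp: Bc_def)
  have agree_Fin: "\<forall>j<1. G (Fin i) j = G' (Fin i) j" if i: "i \<in> {1..2*g+1}" for i
  proof (intro allI impI)
    fix j :: int assume "j < 1"
    then have "j < 0 \<or> j = 0" by linarith
    then show "G (Fin i) j = G' (Fin i) j" using G_Fin[OF i] const i by auto
  qed
  have G_Infty: "\<forall>l<1. G Infty l = 0" "\<forall>l<1. G' Infty l = 0"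
    using G G' by (auto simp: Bc_def)
  have prin_eq: "prin la (lmul (h la) (G la)) = prin la (lmul (h la) (G' la))"
    if "la \<in> Lam g" for la
    using that unfolding Lam_cases
  proof (elim disjE bexE)
    assume la: "la = Infty"
    have "\<forall>j<1. G Infty j = G' Infty j" using G_Infty by simp
    then have "lmul (h Infty) (G Infty) l = lmul (h Infty) (G' Infty) l" if "l \<le> 0" for l
      using lmul_agree_below[OF h_Infty(1) G_Infty, of 1 l] that by simp
    then show ?thesis using la by (simp add: fun_eq_iff)
  next
    fix i assume i: "i \<in> {1..2*g+1}" and la: "la = Fin i"
    have h_i: "\<forall>l< -1. h (Fin i) l = 0" using h_Fin i by blast
    have "lmul (h (Fin i)) (G (Fin i)) l = lmul (h (Fin i)) (G' (Fin i)) l" if "l < 0" for l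
      using lmul_agree_below[OF h_i G_Fin[OF i] agree_Fin[OF i], of l] that by simp
    then show ?thesis using la by (simp add: fun_eq_iff)
  qed
  have local_eq: "dt mu (G mu) l + lmul (h mu) (G mu) l = dt mu (G' mu) l + lmul (h mu) (G' mu) l"
    if mu: "mu \<in> Lam g" for mu l
  proof -
    have "dt mu (G mu) l + act g lam h G mu l = dt mu (G' mu) l + act g lam h G' mu l"
      using E E' by simp
    moreover have "(\<Sum>la\<in>Lam g. pp_exp lam la mu (prin la (lmul (h la) (G la))) l)
        = (\<Sum>la\<in>Lam g. pp_exp lam la mu (prin la (lmul (h la) (G' la))) l)"
      using prin_eq by (intro sum.cong) auto
    ultimately show ?thesis using mu unfolding act_def by simp
  qed
  show "G = G'"
  proof
    fix mu
    show "G mu = G' mu"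
    proof (cases "mu \<in> Lam g")
      case False
      then show ?thesis using G G' by (simp add: Bc_def)
    next
      case True
      then show ?thesis unfolding Lam_cases
      proof (elim disjE bexE)
        assume mu: "mu = Infty"
        have "Infty \<in> Lam g" by (simp add: Lam_def)
        then show ?thesis unfolding mu
          using local_solution_unique_Infty[OF h_Infty G_Infty] local_eq by blast
      next
        fix i assume i: "i \<in> {1..2*g+1}" and mu: "mu = Fin i"
        have "Fin i \<in> Lam g" using i by (simp add: Lam_def)
        moreover have "\<forall>l< -1. h (Fin i) l = 0" "h (Fin i) (-1) = 1/2" using h_Fin i by auto
        ultimately show ?thesis unfolding mu
          using local_solution_unique_Fin[OF _ _ G_Fin[OF i]] const i local_eq by blast
      qed
    qed
  qed
qed

lemma distinct_points:
  assumes "padic_setting p absv"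
    and "\<forall>i\<in>{1..2*g+1}. \<forall>j\<in>{1..2*g+1}. i \<noteq> j \<longrightarrow> \<not> absv (lam i - lam j) < 1"
  shows "\<forall>i\<in>{1..2*g+1}. \<forall>j\<in>{1..2*g+1}. i \<noteq> j \<longrightarrow> lam i \<noteq> (lam j :: 'a::field_char_0)"
proof (intro ballI impI notI)
  fix i j assume i: "i \<in> {1..2*g+1}" and j: "j \<in> {1..2*g+1}" and "i \<noteq> j" "lam i = lam j"
  moreover have "absv (lam i - lam j) = 0" using assms(1) \<open>lam i = lam j\<close> by (simp add: padic_setting_def)
  ultimately show False using assms(2) by fastforce
qed

theorem mainTheorem3:
  fixes p :: nat and absv :: "'a::field_char_0 \<Rightarrow> real"
    and g :: nat and lam :: "nat \<Rightarrow> 'a"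
  assumes "padic_setting p absv"
    and "g \<ge> 1"
    and "\<forall>i\<in>{1..2*g+1}. absv (lam i) \<le> 1"
    and "\<forall>i\<in>{1..2*g+1}. \<forall>j\<in>{1..2*g+1}. i \<noteq> j \<longrightarrow> \<not> absv (lam i - lam j) < 1"
  shows "inj_on (Phi g) (Hc absv g lam)"
proof (rule inj_onI)
  fix m m' assume m: "m \<in> Hc absv g lam" and m': "m' \<in> Hc absv g lam"
    and same_Phi: "Phi g m = Phi g m'"
  have distinct: "\<forall>i\<in>{1..2*g+1}. \<forall>j\<in>{1..2*g+1}. i \<noteq> j \<longrightarrow> lam i \<noteq> lam j"
    using distinct_points[OF assms(1,4)] .
  have const: "\<forall>i\<in>{1..2*g+1}. fst m (Fin i) 0 = fst m' (Fin i) 0 \<and> snd m (Fin i) 0 = snd m' (Fin i) 0"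
    using same_Phi unfolding Phi_def by (metis (no_types, lifting) prod.inject)
  have "fst m = fst m'"
    using m m' const
    by (intro horizontal_Bc_unique[where absv = absv and g = g])
       (auto simp: Hc_def nabla_c_def fun_eq_iff)
  moreover have "snd m = snd m'"
    using m m' const h_exp_Fin[OF distinct] h_exp_Infty[of g lam]
    by (intro twisted_horizontal_Bc_unique[where absv = absv and g = g and lam = lam and h = "h_exp g lam"])
       (auto simp: Hc_def nabla_c_def fun_eq_iff)
  ultimately show "m = m'" by (simp add: prod_eq_iff)
qed

end
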